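(* Let $e[r]$ be an affine function of $r\in\mathbb{R}$ with $e[1]>0$ and $e[-1]>0$, and let $K$ and $U$ be as in the context. Then $K^\Lambda=K^{co}=\overline U$, where $K^{co}$ is the convex hull and $K^\Lambda$ the $\Lambda$-convex hull of $K$.
   Context: Let $n\ge2$, $\mathcal S_0^{n\times n}$ the trace-free symmetric matrices, $Z:=\mathbb{R}\times\mathbb{R}^n\times\mathbb{R}^n\times\mathcal S_0^{n\times n}\times\mathbb{R}$ with elements $z=(\rho,v,m,\sigma,p)$. $K:=\{z:\rho\in\{\pm1\},m=\rho v,v\otimes v-\sigma=e[\rho]\mathrm{Id}\}$. For $\rho\in(-1,1)$ let $M(z)=\frac{v\otimes v-\rho(m\otimes v+v\otimes m)+m\otimes m}{1-\rho^2}-\sigma$, $Q(z)=\lambda_{\max}(M(z))$ (maximal eigenvalue), $T_\pm(z)=\frac{|m\pm v|^2}{n(\rho\pm1)^2}$, and $U:=\{z:\rho\in(-1,1),T_\pm(z)<e[\pm1],Q(z)<e[\rho]\}$. Wave cone: $M_\Lambda(\bar z):=\begin{pmatrix}\bar\sigma+\bar p\,\mathrm{Id}&\bar v\\ \bar v^T&0\\ \bar m^T&\bar\rho\end{pmatrix}$, $\Lambda:=\{\bar z:\ker M_\Lambda(\bar z)\ne\{0\},(\bar\rho,\bar v)\ne0\}$. A function $h:Z\to\mathbb{R}$ is $\Lambda$-convex if $s\mapsto h(z+s\bar z)$ is convex for all $z\in Z$, $\bar z\in\Lambda$; the $\Lambda$-convex hull is $K^\Lambda:=\{z\in Z:h(z)\le\sup_Kh\text{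 for all }\Lambda\text{-convex }h:Z\to\mathbb{R}\}$. *)

theory Defs
  imports "HOL-Analysis.Analysis"
begin

type_synonym 'n zvec = "real \<times> (real^'n) \<times> (real^'n) \<times> (real^'n^'n) \<times> real"

definition outer :: "real^'n \<Rightarrow> real^'n \<Rightarrow> real^'n^'n" where
  "outer u w = (\<chi> i j. u$i * w$j)"

definition Zspace :: "('n::finite) zvec set" where
  "Zspace = {(\<rho>, v, m, \<sigma>, p). transpose \<sigma> = \<sigma> \<and> trace \<sigma> = 0}"

definition Kset :: "(real \<Rightarrow> real) \<Rightarrow> ('n::finite) zvec set" where
  "Kset e = {z \<in> Zspace. case z of (\<rho>, v, m, \<sigma>, p) \<Rightarrow>
      (\<rho> = 1 \<or> \<rho> = -1) \<and> m = \<rho> *\<^sub>R v \<and> outer v v - \<sigma> = e \<rho> *\<^sub>R mat 1}"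

definition Mmat :: "('n::finite) zvec \<Rightarrow> real^'n^'n" where
  "Mmat z = (case z of (\<rho>, v, m, \<sigma>, p) \<Rightarrow>
     (1 / (1 - \<rho>^2)) *\<^sub>R (outer v v - \<rho> *\<^sub>R (outer m v + outer v m) + outer m m) - \<sigma>)"

definition lambda_max :: "real^'n^'n \<Rightarrow> real" where
  "lambda_max A = Max {l. \<exists>x. x \<noteq> 0 \<and> A *v x = l *\<^sub>R x}"

definition Qfun :: "('n::finite) zvec \<Rightarrow> real" where
  "Qfun z = lambda_max (Mmat z)"

definition Tplus :: "('n::finite) zvec \<Rightarrow> real" where
  "Tplus z = (case z of (\<rho>, v, m, \<sigma>, p) \<Rightarrow>
     (norm (m + v))^2 / (real CARD('n) * (\<rho> + 1)^2))"

definition Tminus :: "('n::finite) zvec \<Rightarrow> real" where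
  "Tminus z = (case z of (\<rho>, v, m, \<sigma>, p) \<Rightarrow>
     (norm (m - v))^2 / (real CARD('n) * (\<rho> - 1)^2))"

definition Uset :: "(real \<Rightarrow> real) \<Rightarrow> ('n::finite) zvec set" where
  "Uset e = {z \<in> Zspace. -1 < fst z \<and> fst z < 1 \<and> Tplus z < e 1 \<and> Tminus z < e (-1)
      \<and> Qfun z < e (fst z)}"

text \<open>Wave cone: ker M_Lambda(zb) nontrivial, written out: there is (xi, tau) \<noteq> 0 with
  (sigma + p Id) xi + tau v = 0,  v . xi = 0,  m . xi + tau rho = 0; and (rho, v) \<noteq> 0.\<close>
definition wave_cone :: "('n::finite) zvec set" where
  "wave_cone = {zb \<in> Zspace. case zb of (\<rho>, v, m, \<sigma>, p) \<Rightarrow>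
      (\<exists>(\<xi>::real^'n) (\<tau>::real). (\<xi>, \<tau>) \<noteq> (0, 0) \<and>
          (\<sigma> + p *\<^sub>R mat 1) *v \<xi> + \<tau> *\<^sub>R v = 0 \<and> v \<bullet> \<xi> = 0 \<and> m \<bullet> \<xi> + \<tau> * \<rho> = 0)
      \<and> (\<rho>, v) \<noteq> (0, 0)}"

definition lambda_convex :: "(('n::finite) zvec \<Rightarrow> real) \<Rightarrow> bool" where
  "lambda_convex h \<longleftrightarrow> (\<forall>z\<in>Zspace. \<forall>zb\<in>wave_cone. convex_on UNIV (\<lambda>s::real. h (z + s *\<^sub>R zb)))"

definition lambda_hull :: "('n::finite) zvec set \<Rightarrow> ('n::finite) zvec set" where
  "lambda_hull K = {z \<in> Zspace. \<forall>h. lambda_convex h \<longrightarrow>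
      ereal (h z) \<le> (SUP k\<in>K. ereal (h k))}"

end

theory Submission
  imports Defs
begin

lemma outer_mult_vec: "outer u w *v x = (w \<bullet> x) *\<^sub>R u"
  by (simp add: outer_def matrix_vector_mult_def vec_eq_iff inner_vec_def sum_distrib_left mult_ac)

lemma inner_outer_mult_vec: "x \<bullet> (outer u w *v x) = (u \<bullet> x) * (w \<bullet> x)"
  by (simp add: outer_mult_vec inner_commute)

lemma transpose_outer: "transpose (outer u w) = outer w u"
  by (simp add: outer_def transpose_def vec_eq_iff)

lemma trace_outer: "trace (outer u w) = u \<bullet> w"
  by (simp add: outer_def trace_def inner_vec_def)

lemma outer_sum_left: "outer (\<Sum>i\<in>I. f i) w = (\<Sum>i\<in>I. outer (f i) w)"
  by (simp add: outer_def vec_eq_iff sum_distrib_right)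

lemma outer_sum_right: "outer w (\<Sum>i\<in>I. f i) = (\<Sum>i\<in>I. outer w (f i))"
  by (simp add: outer_def vec_eq_iff sum_distrib_left)

lemma transpose_add: "transpose (A + B) = transpose A + transpose (B::real^'n^'n)"
  by (simp add: transpose_def vec_eq_iff)

lemma transpose_diff: "transpose (A - B) = transpose A - transpose (B::real^'n^'n)"
  by (simp add: transpose_def vec_eq_iff)

lemma trace_scaleR: "trace (c *\<^sub>R (A::real^'n^'n)) = c * trace A"
  by (simp add: trace_def sum_distrib_left)

lemma trace_sum: "trace (\<Sum>i\<in>I. f i) = (\<Sum>i\<in>I. trace (f i :: real^'n^'n))"
  by (induction I rule: infinite_finite_induct) (simp_all add: trace_add trace_def[of 0])

lemma scaleR_mult_vec: "(c *\<^sub>R A) *v x = c *\<^sub>R (A *v (x::real^'n))"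
  by (simp add: scaleR_matrix_vector_assoc)

lemma inner_mult_vec_symmetric:
  assumes "transpose M = (M::real^'n^'n)"
  shows "x \<bullet> (M *v y) = y \<bullet> (M *v x)"
  by (metis assms dot_lmul_matrix inner_commute transpose_matrix_vector)

definition psd :: "real^'n^'n \<Rightarrow> bool" where
  "psd P \<longleftrightarrow> transpose P = P \<and> (\<forall>x. 0 \<le> x \<bullet> (P *v x))"

lemma psd_zero: "psd 0"
  by (simp add: psd_def transpose_def vec_eq_iff)

lemma psd_outer: "psd (outer g g)"
  by (simp add: psd_def transpose_outer inner_outer_mult_vec)

lemma psd_add: "psd P \<Longrightarrow> psd Q \<Longrightarrow> psd (P + Q)"
  by (simp add: psd_def transpose_add matrix_vector_mult_add_rdistrib inner_add_right)

lemma psd_scaleR: "0 \<le> c \<Longrightarrow> psd P \<Longrightarrow> psd (c *\<^sub>R P)"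
  by (simp add: psd_def transpose_scalar scaleR_mult_vec)

lemma psd_sum: "(\<And>i. i \<in> I \<Longrightarrow> psd (f i)) \<Longrightarrow> psd (\<Sum>i\<in>I. f i)"
  by (induction I rule: infinite_finite_induct) (simp_all add: psd_zero psd_add)

lemma trace_nonneg_psd:
  assumes "psd P" shows "0 \<le> trace P"
proof -
  have "P $ i $ i = axis i 1 \<bullet> (P *v axis i 1)" for i
    by (simp add: matrix_vector_mult_basis inner_axis' column_def)
  then show ?thesis
    using assms by (simp add: trace_def psd_def sum_nonneg)
qed

lemma psd_quadratic_eq_0_imp_kernel:
  assumes "psd P" and "x \<bullet> (P *v x) = 0"
  shows "P *v x = 0"
proof -
  define w where "w = P *v x"
  define k where "k = w \<bullet> (P *v w)"
  have k: "0 \<le> k" using assms(1) by (simp add: psd_def k_def)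
  have "x \<bullet> (P *v w) = w \<bullet> w"
    using assms(1) by (simp add: psd_def inner_mult_vec_symmetric w_def)
  then have "(x - t *\<^sub>R w) \<bullet> (P *v (x - t *\<^sub>R w)) = t\<^sup>2 * k - 2 * t * (w \<bullet> w)" for t
    using assms(2)
    by (simp add: w_def k_def algebra_simps power2_eq_square inner_commute[of "P *v x" x])
  moreover have "0 \<le> (x - t *\<^sub>R w) \<bullet> (P *v (x - t *\<^sub>R w))" for t
    using assms(1) by (simp add: psd_def)
  ultimately have quad: "2 * t * (w \<bullet> w) \<le> t\<^sup>2 * k" for t
    by (metis diff_ge_0_iff_ge)
  have "w \<bullet> w = 0"
  proof (rule ccontr)
    assume "w \<bullet> w \<noteq> 0"
    then have a: "0 < w \<bullet> w" by simp
    define t where "t = (w \<bullet> w) / (k + 1)"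
    have t: "0 < t" using a k by (simp add: t_def)
    have "t * (2 * (w \<bullet> w)) \<le> t * (t * k)"
      using quad[of t] by (simp add: power2_eq_square algebra_simps)
    then have "2 * (w \<bullet> w) \<le> t * k" using t by simp
    also have "t * k < w \<bullet> w" using a k by (simp add: t_def field_simps)
    finally show False using a by simp
  qed
  then show ?thesis by (simp add: w_def)
qed

lemma quadratic_form_max_on_sphere:
  fixes M :: "real^'n^'n"
  obtains x where "x \<bullet> x = 1" and "\<And>y. y \<bullet> (M *v y) \<le> (x \<bullet> (M *v x)) * (y \<bullet> y)"
proof -
  let ?f = "\<lambda>x::real^'n. x \<bullet> (M *v x)"
  have "continuous_on (sphere 0 1) ?f"
    by (intro continuous_intros linear_continuous_on matrix_vector_mul_bounded_linear)
  moreover have "sphere (0::real^'n) 1 \<noteq> {}" by simp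
  ultimately obtain x where x: "x \<in> sphere 0 1" and max: "\<forall>y\<in>sphere 0 1. ?f y \<le> ?f x"
    using continuous_attains_sup[OF compact_sphere] by blast
  have "?f y \<le> ?f x * (y \<bullet> y)" for y
  proof (cases "y = 0")
    case False
    then have "(1 / norm y) *\<^sub>R y \<in> sphere 0 1" by simp
    then have "?f ((1 / norm y) *\<^sub>R y) \<le> ?f x" using max by blast
    moreover have "?f ((1 / norm y) *\<^sub>R y) = (1 / norm y)\<^sup>2 * ?f y"
      by (simp only: matrix_vector_mult_scaleR inner_scaleR_left inner_scaleR_right
          power2_eq_square mult.assoc)
    ultimately have "(1 / norm y)\<^sup>2 * ?f y \<le> ?f x" by simp
    then have "(norm y)\<^sup>2 * ((1 / norm y)\<^sup>2 * ?f y) \<le> (norm y)\<^sup>2 * ?f x"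
      by (rule mult_left_mono) simp
    then show ?thesis
      using False by (simp add: power2_norm_eq_inner field_simps)
  qed simp
  moreover have "x \<bullet> x = 1" using x by (simp add: norm_eq_1)
  ultimately show thesis using that by blast
qed

lemma symmetric_top_eigenvector:
  fixes M :: "real^'n^'n"
  assumes "transpose M = M"
  obtains x c where "x \<noteq> 0" and "M *v x = c *\<^sub>R x" and "\<And>y. y \<bullet> (M *v y) \<le> c * (y \<bullet> y)"
proof -
  obtain x where x: "x \<bullet> x = 1" and max: "\<And>y. y \<bullet> (M *v y) \<le> (x \<bullet> (M *v x)) * (y \<bullet> y)"
    using quadratic_form_max_on_sphere[of M] by blast
  define c where "c = x \<bullet> (M *v x)"
  \<comment> \<open>the Rayleigh maximum makes \<open>c Id - M\<close> positive semidefinite with \<open>x\<close> in its null form\<close>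
  have "psd (c *\<^sub>R mat 1 - M)"
    using max assms by (simp add: psd_def c_def transpose_diff transpose_scalar
        matrix_vector_mult_diff_rdistrib scaleR_mult_vec inner_diff_right)
  moreover have "x \<bullet> ((c *\<^sub>R mat 1 - M) *v x) = 0"
    using x by (simp add: c_def matrix_vector_mult_diff_rdistrib scaleR_mult_vec inner_diff_right)
  ultimately have "(c *\<^sub>R mat 1 - M) *v x = 0" by (rule psd_quadratic_eq_0_imp_kernel)
  then have "M *v x = c *\<^sub>R x"
    by (simp add: matrix_vector_mult_diff_rdistrib scaleR_mult_vec)
  moreover have "x \<noteq> 0" using x by auto
  ultimately show thesis using that max c_def by blast
qed

lemma finite_eigenvalues_symmetric:
  fixes M :: "real^'n^'n"
  assumes "transpose M = M"
  shows "finite {l. \<exists>x. x \<noteq> 0 \<and> M *v x = l *\<^sub>R x}" (is "finite ?E")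
proof -
  define E where "E = ?E"
  define ev where "ev l = (SOME x. x \<noteq> 0 \<and> M *v x = l *\<^sub>R x)" for l
  have ev: "ev l \<noteq> 0 \<and> M *v ev l = l *\<^sub>R ev l" if l: "l \<in> E" for l
  proof -
    obtain x where "x \<noteq> 0 \<and> M *v x = l *\<^sub>R x" using l by (auto simp: E_def)
    then show ?thesis unfolding ev_def by (rule someI)
  qed
  have "inj_on ev E"
  proof (rule inj_onI)
    fix l l' assume l: "l \<in> E" and l': "l' \<in> E" and eq: "ev l = ev l'"
    have "l *\<^sub>R ev l = l' *\<^sub>R ev l" using ev[OF l] ev[OF l'] eq by metis
    then show "l = l'" using ev[OF l] by (simp add: scaleR_cancel_right)
  qed
  moreover have orth: "pairwise orthogonal (ev ` E)"
  proof (clarsimp simp: pairwise_def orthogonal_def)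
    fix l l' assume l: "l \<in> E" and l': "l' \<in> E" and ne: "ev l \<noteq> ev l'"
    have "ev l \<bullet> (M *v ev l') = ev l' \<bullet> (M *v ev l)"
      by (rule inner_mult_vec_symmetric[OF assms])
    then have "l' * (ev l \<bullet> ev l') = l * (ev l \<bullet> ev l')"
      using ev[OF l] ev[OF l'] by (simp add: inner_commute)
    moreover have "l \<noteq> l'" using ne by auto
    ultimately show "ev l \<bullet> ev l' = 0" by (metis mult_cancel_right)
  qed
  have "independent (ev ` E)"
    by (rule pairwise_orthogonal_independent[OF orth]) (use ev in auto)
  then have "finite (ev ` E)" by (rule independent_bound_general[THEN conjunct1])
  ultimately have "finite E" by (rule finite_imageD[rotated])
  then show ?thesis by (simp add: E_def)
qed

lemma lambda_max_symmetric:
  fixes M :: "real^'n^'n"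
  assumes "transpose M = M"
  shows "\<exists>x. x \<noteq> 0 \<and> M *v x = lambda_max M *\<^sub>R x"
    and "y \<bullet> (M *v y) \<le> lambda_max M * (y \<bullet> y)"
proof -
  obtain x c where x: "x \<noteq> 0" "M *v x = c *\<^sub>R x" and max: "\<And>y. y \<bullet> (M *v y) \<le> c * (y \<bullet> y)"
    using symmetric_top_eigenvector[OF assms] by blast
  have "lambda_max M = c"
    unfolding lambda_max_def
  proof (rule Max_eqI[OF finite_eigenvalues_symmetric[OF assms]])
    fix l assume "l \<in> {l. \<exists>x. x \<noteq> 0 \<and> M *v x = l *\<^sub>R x}"
    then obtain y where y: "y \<noteq> 0" "M *v y = l *\<^sub>R y" by blast
    then have "l * (y \<bullet> y) \<le> c * (y \<bullet> y)" using max[of y] by simp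
    then show "l \<le> c" using y by (simp add: mult_le_cancel_right)
  qed (use x in blast)
  then show "\<exists>x. x \<noteq> 0 \<and> M *v x = lambda_max M *\<^sub>R x" and "y \<bullet> (M *v y) \<le> lambda_max M * (y \<bullet> y)"
    using x max by auto
qed

lemma lambda_max_less:
  fixes M :: "real^'n^'n"
  assumes "transpose M = M" and "\<And>x. x \<noteq> 0 \<Longrightarrow> x \<bullet> (M *v x) < c * (x \<bullet> x)"
  shows "lambda_max M < c"
proof -
  obtain x where x: "x \<noteq> 0" "M *v x = lambda_max M *\<^sub>R x"
    using lambda_max_symmetric(1)[OF assms(1)] by blast
  then have "lambda_max M * (x \<bullet> x) < c * (x \<bullet> x)" using assms(2)[of x] by simp
  then show ?thesis using x(1) by (simp add: mult_less_cancel_right)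
qed

lemma psd_lambda_max_le:
  fixes M :: "real^'n^'n"
  assumes "transpose M = M" and "lambda_max M \<le> c"
  shows "psd (c *\<^sub>R mat 1 - M)"
proof -
  have "y \<bullet> (M *v y) \<le> c * (y \<bullet> y)" for y
    using lambda_max_symmetric(2)[OF assms(1), of y] assms(2)
    by (meson inner_ge_zero mult_right_mono order_trans)
  then show ?thesis using assms(1)
    by (simp add: psd_def transpose_diff transpose_scalar matrix_vector_mult_diff_rdistrib
        scaleR_mult_vec inner_diff_right)
qed

lemma psd_remove_rank_one:
  fixes P :: "real^'n^'n"
  assumes psd: "psd P" and "P \<noteq> 0"
  obtains g where "psd (P - outer g g)" and "{y. P *v y = 0} \<subset> {y. (P - outer g g) *v y = 0}"
proof -
  have sym: "transpose P = P" using psd by (simp add: psd_def)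
  obtain x c where x0: "x \<noteq> 0" and Px: "P *v x = c *\<^sub>R x" and max: "\<And>y. y \<bullet> (P *v y) \<le> c * (y \<bullet> y)"
    using symmetric_top_eigenvector[OF sym] by blast
  have xx: "x \<bullet> x > 0" using x0 by simp
  have "c > 0"
  proof (rule ccontr)
    assume "\<not> c > 0"
    then have "y \<bullet> (P *v y) = 0" for y
      using max[of y] psd mult_nonpos_nonneg[of c "y \<bullet> y"] by (simp add: psd_def order_antisym)
    then have "P *v y = 0 *v y" for y using psd_quadratic_eq_0_imp_kernel[OF psd] by simp
    then show False using \<open>P \<noteq> 0\<close> matrix_eq by blast
  qed
  define k where "k = c / (x \<bullet> x)"
  define g where "g = sqrt k *\<^sub>R x"
  have k: "k > 0" using \<open>c > 0\<close> xx by (simp add: k_def)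
  have xPy: "x \<bullet> (P *v y) = c * (x \<bullet> y)" for y
    using inner_mult_vec_symmetric[OF sym, of x y] Px by (simp add: inner_commute)
  have P'y: "(P - outer g g) *v y = P *v y - (k * (x \<bullet> y)) *\<^sub>R x" for y
    using k by (simp add: g_def matrix_vector_mult_diff_rdistrib outer_mult_vec)
  have "psd (P - outer g g)"
    unfolding psd_def
  proof (intro conjI allI)
    show "transpose (P - outer g g) = P - outer g g"
      by (simp add: transpose_diff transpose_outer sym)
    fix y
    \<comment> \<open>the form of \<open>P - outer g g\<close> at \<open>y\<close> is the form of \<open>P\<close> at the projection of \<open>y\<close> orthogonal to \<open>x\<close>\<close>
    define a where "a = (x \<bullet> y) / (x \<bullet> x)"
    define y' where "y' = y - a *\<^sub>R x"
    have "y' \<bullet> (P *v y') = y \<bullet> (P *v y) - 2 * a * (x \<bullet> (P *v y)) + a\<^sup>2 * (x \<bullet> (P *v x))"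
      using inner_mult_vec_symmetric[OF sym, of x y]
      by (simp add: y'_def matrix_vector_mult_diff_distrib matrix_vector_mult_scaleR
          inner_diff_left inner_diff_right power2_eq_square algebra_simps)
    also have "\<dots> = y \<bullet> (P *v y) - k * (x \<bullet> y)\<^sup>2"
    proof -
      have "2 * a * (c * (x \<bullet> y)) - a\<^sup>2 * (c * (x \<bullet> x)) = k * (x \<bullet> y)\<^sup>2"
        using xx by (simp add: a_def k_def field_simps power2_eq_square)
      then show ?thesis using xPy[of y] xPy[of x] by simp
    qed
    also have "\<dots> = y \<bullet> ((P - outer g g) *v y)"
      by (simp add: P'y inner_diff_right power2_eq_square inner_commute[of y x])
    finally have "y' \<bullet> (P *v y') = y \<bullet> ((P - outer g g) *v y)" .
    then show "0 \<le> y \<bullet> ((P - outer g g) *v y)" using psd by (metis psd_def)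
  qed
  moreover have "{y. P *v y = 0} \<subset> {y. (P - outer g g) *v y = 0}"
  proof
    show "{y. P *v y = 0} \<subseteq> {y. (P - outer g g) *v y = 0}"
      using xPy \<open>c > 0\<close> by (auto simp: P'y) (metis mult_eq_0_iff inner_zero_right less_irrefl)
    have "(P - outer g g) *v x = 0" using xx by (simp add: P'y Px k_def)
    moreover have "P *v x \<noteq> 0" using \<open>c > 0\<close> x0 by (simp add: Px)
    ultimately show "{y. P *v y = 0} \<noteq> {y. (P - outer g g) *v y = 0}" by blast
  qed
  ultimately show thesis using that by blast
qed

lemma psd_eq_sum_outer_squares:
  fixes P :: "real^'n^'n"
  assumes "psd P"
  shows "\<exists>gs. P = (\<Sum>g\<leftarrow>gs. outer g g)"
  using assms
proof (induction "CARD('n) - dim {y. P *v y = 0}" arbitrary: P rule: less_induct)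
  case less
  show ?case
  proof (cases "P = 0")
    case True
    then show ?thesis by (intro exI[of _ "[]"]) simp
  next
    case False
    obtain g where psd': "psd (P - outer g g)"
      and ker: "{y. P *v y = 0} \<subset> {y. (P - outer g g) *v y = 0}"
      using psd_remove_rank_one[OF less.prems False] by blast
    have "subspace {y. Q *v y = 0}" for Q :: "real^'n^'n"
      by (simp add: subspace_def matrix_vector_right_distrib matrix_vector_mult_scaleR)
    then have span_ker: "span {y. Q *v y = 0} = {y. Q *v y = 0}" for Q :: "real^'n^'n"
      by (simp add: span_eq_iff)
    have "dim {y. P *v y = 0} < dim {y. (P - outer g g) *v y = 0}"
      using ker by (intro dim_psubset) (simp only: span_ker)
    moreover have "dim {y. (P - outer g g) *v y = 0} \<le> CARD('n)"
      by (rule dim_subset_UNIV_cart)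
    ultimately obtain gs where "P - outer g g = (\<Sum>g\<leftarrow>gs. outer g g)"
      using less.hyps[OF _ psd'] by fastforce
    then show ?thesis by (intro exI[of _ "g # gs"]) (simp add: algebra_simps)
  qed
qed

lemma rank_one_chord:
  fixes A g :: "real^'n"
  assumes "g \<noteq> 0"
  obtains A1 A2 l where "0 \<le> l" "l \<le> 1" "A1 \<noteq> A2"
    "A1 \<bullet> A1 = A \<bullet> A + g \<bullet> g" "A2 \<bullet> A2 = A \<bullet> A + g \<bullet> g"
    "A = l *\<^sub>R A1 + (1 - l) *\<^sub>R A2"
    "outer A A + outer g g = l *\<^sub>R outer A1 A1 + (1 - l) *\<^sub>R outer A2 A2"
proof -
  define a where "a = A \<bullet> g"
  define q where "q = g \<bullet> g"
  define D where "D = sqrt (a\<^sup>2 + q\<^sup>2)"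
  have q: "q > 0" using assms by (simp add: q_def)
  have D2: "D\<^sup>2 = a\<^sup>2 + q\<^sup>2" by (simp add: D_def)
  have "sqrt (a\<^sup>2) < D"
    unfolding D_def using q by (intro real_sqrt_less_mono) simp
  then have aD: "\<bar>a\<bar> < D" by simp
  \<comment> \<open>\<open>t1\<close> and \<open>t2\<close> are the roots of \<open>q t\<^sup>2 + 2 a t = q\<close>, so \<open>A + t g\<close> keeps the norm of \<open>(A, g)\<close>\<close>
  define t1 where "t1 = (D - a) / q"
  define t2 where "t2 = - (D + a) / q"
  define l where "l = (D + a) / (2 * D)"
  have l: "0 \<le> l" "l \<le> 1" using aD by (auto simp: l_def field_simps)
  have mean: "l * t1 + (1 - l) * t2 = 0"
    using aD q by (simp add: l_def t1_def t2_def field_simps)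
  have var: "l * t1\<^sup>2 + (1 - l) * t2\<^sup>2 = 1"
    using aD q D2 by (simp add: l_def t1_def t2_def field_simps power2_eq_square)
  have root: "2 * t * a + t\<^sup>2 * q = q" if "q * t + a = D \<or> q * t + a = - D" for t
  proof -
    from that have "(q * t + a)\<^sup>2 = D\<^sup>2" by (elim disjE) (simp_all only: power2_minus)
    then have "q * (2 * t * a + t\<^sup>2 * q) = q * q"
      using D2 by (simp add: algebra_simps power2_eq_square)
    then show ?thesis using q by simp
  qed
  have qt: "q * t1 + a = D" "q * t2 + a = - D" using q by (simp_all add: t1_def t2_def)
  have norm_line: "(A + t *\<^sub>R g) \<bullet> (A + t *\<^sub>R g) = A \<bullet> A + (2 * t * a + t\<^sup>2 * q)" for t
    by (simp add: a_def q_def inner_add_left inner_add_right inner_commute[of g A]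
        power2_eq_square algebra_simps)
  define A1 where "A1 = A + t1 *\<^sub>R g"
  define A2 where "A2 = A + t2 *\<^sub>R g"
  have "t1 \<noteq> t2" using aD q by (simp add: t1_def t2_def divide_cancel_right)
  then have "A1 \<noteq> A2" using assms by (simp add: A1_def A2_def)
  moreover have "A1 \<bullet> A1 = A \<bullet> A + g \<bullet> g" "A2 \<bullet> A2 = A \<bullet> A + g \<bullet> g"
    using root qt by (simp_all add: A1_def A2_def norm_line q_def)
  moreover have "l *\<^sub>R A1 + (1 - l) *\<^sub>R A2 = A + (l * t1 + (1 - l) * t2) *\<^sub>R g"
    by (simp add: A1_def A2_def algebra_simps)
  then have "A = l *\<^sub>R A1 + (1 - l) *\<^sub>R A2" using mean by simp
  moreover have "outer A A + outer g g = l *\<^sub>R outer A1 A1 + (1 - l) *\<^sub>R outer A2 A2"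
  proof -
    have "l * ((A$i + t1 * g$i) * (A$j + t1 * g$j)) + (1 - l) * ((A$i + t2 * g$i) * (A$j + t2 * g$j))
        = A$i * A$j + (A$i * g$j + g$i * A$j) * (l * t1 + (1 - l) * t2)
          + g$i * g$j * (l * t1\<^sup>2 + (1 - l) * t2\<^sup>2)" for i j
      by (simp add: algebra_simps power2_eq_square)
    then show ?thesis
      using mean var by (simp add: vec_eq_iff outer_def A1_def A2_def)
  qed
  ultimately show thesis using that l by blast
qed

definition pole_point :: "(real \<Rightarrow> real) \<Rightarrow> real \<Rightarrow> real^'n \<Rightarrow> real^'n^'n \<Rightarrow> real \<Rightarrow> ('n::finite) zvec"
  where "pole_point e r A G p = (r, A, r *\<^sub>R A, outer A A + G - e r *\<^sub>R mat 1, p)"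

lemma Kset_eq:
  "(Kset e :: ('n::finite) zvec set) =
    {pole_point e r A 0 p | r A p. (r = 1 \<or> r = -1) \<and> A \<bullet> A = real CARD('n) * e r}"
proof -
  have tr: "trace (outer A A - e r *\<^sub>R mat 1 :: real^'n^'n) = A \<bullet> A - real CARD('n) * e r" for A r
    by (simp add: trace_sub trace_outer trace_scaleR trace_I mult.commute)
  have sym: "transpose (outer A A - e r *\<^sub>R mat 1) = outer A A - e r *\<^sub>R (mat 1 :: real^'n^'n)" for A r
    by (simp add: transpose_diff transpose_outer transpose_scalar)
  show ?thesis
  proof (intro set_eqI iffI)
    fix k :: "'n zvec" assume "k \<in> Kset e"
    then obtain r v p where r: "r = 1 \<or> r = -1" and k: "k = pole_point e r v 0 p"
      and "trace (outer v v - e r *\<^sub>R mat 1 :: real^'n^'n) = 0"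
      by (auto simp: Kset_def Zspace_def pole_point_def algebra_simps)
    then show "k \<in> {pole_point e r A 0 p | r A p. (r = 1 \<or> r = -1) \<and> A \<bullet> A = real CARD('n) * e r}"
      using tr by auto
  next
    fix k :: "'n zvec"
    assume "k \<in> {pole_point e r A 0 p | r A p. (r = 1 \<or> r = -1) \<and> A \<bullet> A = real CARD('n) * e r}"
    then show "k \<in> Kset e" using tr sym by (auto simp: Kset_def Zspace_def pole_point_def)
  qed
qed

lemma pole_point_in_Kset:
  "r = 1 \<or> r = -1 \<Longrightarrow> A \<bullet> A = real CARD('n) * e r \<Longrightarrow> pole_point e r A 0 p \<in> (Kset e :: ('n::finite) zvec set)"
  by (auto simp: Kset_eq)

lemma wave_cone_scaleR:
  assumes "zb \<in> wave_cone" and "c \<noteq> 0"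
  shows "c *\<^sub>R zb \<in> (wave_cone :: ('n::finite) zvec set)"
proof -
  obtain r v m s p where zb: "zb = (r, v, m, s, p)" by (cases zb)
  from assms(1) obtain \<xi> \<tau> where z: "transpose s = s" "trace s = 0" and ne: "(\<xi>, \<tau>) \<noteq> (0, 0)"
    and e1: "(s + p *\<^sub>R mat 1) *v \<xi> + \<tau> *\<^sub>R v = 0" and e2: "v \<bullet> \<xi> = 0" and e3: "m \<bullet> \<xi> + \<tau> * r = 0"
    and rv: "(r, v) \<noteq> (0, 0)"
    unfolding wave_cone_def Zspace_def zb by auto
  have "(c *\<^sub>R s + (c * p) *\<^sub>R mat 1) *v \<xi> + \<tau> *\<^sub>R (c *\<^sub>R v) = c *\<^sub>R ((s + p *\<^sub>R mat 1) *v \<xi> + \<tau> *\<^sub>R v)"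
    by (simp add: scaleR_mult_vec matrix_vector_mult_add_rdistrib algebra_simps)
  then have "(c *\<^sub>R s + (c * p) *\<^sub>R mat 1) *v \<xi> + \<tau> *\<^sub>R (c *\<^sub>R v) = 0" using e1 by simp
  moreover have "(c *\<^sub>R m) \<bullet> \<xi> + \<tau> * (c * r) = c * (m \<bullet> \<xi> + \<tau> * r)" by (simp add: algebra_simps)
  ultimately show ?thesis
    using z ne e2 e3 rv assms(2)
    by (simp add: wave_cone_def Zspace_def zb transpose_scalar trace_scaleR, blast)
qed

lemma pole_point_diff_in_wave_cone:
  assumes n: "CARD('n::finite) \<ge> 2" and ne: "(r, A) \<noteq> (r', B)"
    and norms: "A \<bullet> A - B \<bullet> B = real CARD('n) * (e r - e r')" and p: "p - q = e r - e r'"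
  shows "pole_point e r A G p - pole_point e r' B G q \<in> (wave_cone :: 'n zvec set)"
proof -
  obtain \<xi> :: "real^'n" where \<xi>: "\<xi> \<noteq> 0" "orthogonal (A - B) \<xi>"
    using orthogonal_to_vector_exists[of "A - B"] n by auto
  define c where "c = A \<bullet> \<xi>"
  have Bc: "B \<bullet> \<xi> = c" using \<xi>(2) by (simp add: c_def orthogonal_def inner_diff_left)
  define \<sigma> where "\<sigma> = outer A A - outer B B - (e r - e r') *\<^sub>R (mat 1 :: real^'n^'n)"
  have diff: "pole_point e r A G p - pole_point e r' B G q = (r - r', A - B, r *\<^sub>R A - r' *\<^sub>R B, \<sigma>, p - q)"
    by (simp add: pole_point_def \<sigma>_def algebra_simps)
  have "transpose \<sigma> = \<sigma>"
    by (simp add: \<sigma>_def transpose_diff transpose_outer transpose_scalar)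
  moreover have "trace \<sigma> = A \<bullet> A - B \<bullet> B - (e r - e r') * real CARD('n)"
    by (simp add: \<sigma>_def trace_sub trace_outer trace_scaleR trace_I)
  then have "trace \<sigma> = 0" using norms by simp
  moreover have "\<sigma> + (p - q) *\<^sub>R mat 1 = outer A A - outer B B" using p by (simp add: \<sigma>_def)
  then have "(\<sigma> + (p - q) *\<^sub>R mat 1) *v \<xi> + (- c) *\<^sub>R (A - B) = 0"
    by (simp only: matrix_vector_mult_diff_rdistrib outer_mult_vec)
      (simp add: c_def Bc inner_commute[of \<xi>] algebra_simps)
  moreover have "(A - B) \<bullet> \<xi> = 0" using \<xi>(2) by (simp add: orthogonal_def)
  moreover have "(r *\<^sub>R A - r' *\<^sub>R B) \<bullet> \<xi> + (- c) * (r - r') = 0"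
    by (simp add: inner_diff_left c_def Bc algebra_simps)
  moreover have "(r - r', A - B) \<noteq> (0, 0)" using ne by auto
  ultimately show ?thesis
    unfolding diff wave_cone_def Zspace_def using \<xi>(1) by (auto intro!: exI[of _ \<xi>] exI[of _ "- c"])
qed

definition lambda_convex_set :: "('n::finite) zvec set \<Rightarrow> bool" where
  "lambda_convex_set S \<longleftrightarrow> (\<forall>z\<in>S. \<forall>w\<in>S. w - z \<in> wave_cone \<longrightarrow> closed_segment z w \<subseteq> S)"

lemma lambda_convex_setD:
  assumes "lambda_convex_set S" "z \<in> S" "w \<in> S" "z - w \<in> wave_cone" "0 \<le> l" "l \<le> 1"
  shows "l *\<^sub>R z + (1 - l) *\<^sub>R w \<in> S"
proof -
  have "(1 - l) *\<^sub>R w + l *\<^sub>R z \<in> closed_segment w z"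
    using assms(5,6) by (auto simp: closed_segment_def)
  then show ?thesis using assms(1-4) by (auto simp: lambda_convex_set_def add.commute)
qed

lemma convex_imp_lambda_convex_set: "convex S \<Longrightarrow> lambda_convex_set S"
  by (simp add: lambda_convex_set_def closed_segment_subset)

lemma convex_Zspace: "convex (Zspace :: ('n::finite) zvec set)"
  by (rule convexI)
    (auto simp: Zspace_def transpose_add transpose_scalar trace_add trace_scaleR)

lemma Kset_subset_lambda_hull: "Kset e \<subseteq> lambda_hull (Kset e :: ('n::finite) zvec set)"
  by (auto simp: lambda_hull_def Kset_def intro: SUP_upper)

lemma lambda_convex_set_lambda_hull: "lambda_convex_set (lambda_hull (K :: ('n::finite) zvec set))"
  unfolding lambda_convex_set_def
proof (intro ballI impI subsetI)
  fix z w y :: "'n zvec"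
  assume z: "z \<in> lambda_hull K" and w: "w \<in> lambda_hull K" and wz: "w - z \<in> wave_cone"
    and "y \<in> closed_segment z w"
  then obtain u where u: "0 \<le> u" "u \<le> 1" and y: "y = z + u *\<^sub>R (w - z)"
    by (auto simp: closed_segment_def algebra_simps)
  have Z: "z \<in> Zspace" "w \<in> Zspace" using z w by (auto simp: lambda_hull_def)
  have "y \<in> Zspace"
    using convexD[OF convex_Zspace Z(1) Z(2), of "1 - u" u] u by (simp add: y algebra_simps)
  moreover have "ereal (h y) \<le> (SUP k\<in>K. ereal (h k))" if h: "lambda_convex h" for h
  proof -
    have "convex_on UNIV (\<lambda>s. h (z + s *\<^sub>R (w - z)))"
      using h Z(1) wz by (simp add: lambda_convex_def)
    from convex_onD[OF this, of u 0 1] u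
    have "h y \<le> (1 - u) * h z + u * h w" by (simp add: y algebra_simps)
    also have "\<dots> \<le> max (h z) (h w)" using u by (simp add: convex_bound_le)
    finally have "h y \<le> h z \<or> h y \<le> h w" by (simp add: le_max_iff_disj)
    moreover have "ereal (h z) \<le> (SUP k\<in>K. ereal (h k))" "ereal (h w) \<le> (SUP k\<in>K. ereal (h k))"
      using z w h by (simp_all add: lambda_hull_def)
    ultimately show ?thesis by (metis ereal_less_eq(3) order_trans)
  qed
  ultimately show "y \<in> lambda_hull K" by (simp add: lambda_hull_def)
qed

definition pole_mixture :: "(real \<Rightarrow> real) \<Rightarrow> ('n::finite) zvec set" where
  "pole_mixture e = {\<mu> *\<^sub>R pole_point e 1 A G p1 + (1 - \<mu>) *\<^sub>R pole_point e (-1) B H p2 | \<mu> A G B H p1 p2.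
      0 \<le> \<mu> \<and> \<mu> \<le> 1 \<and> psd G \<and> psd H \<and>
      A \<bullet> A + trace G = real CARD('n) * e 1 \<and> B \<bullet> B + trace H = real CARD('n) * e (-1)}"

lemma pole_point_split:
  assumes "A = l *\<^sub>R A1 + (1 - l) *\<^sub>R A2"
    and "outer A A + outer g g = l *\<^sub>R outer A1 A1 + (1 - l) *\<^sub>R outer A2 A2"
  shows "pole_point e r A (outer g g + G) p = l *\<^sub>R pole_point e r A1 G p + (1 - l) *\<^sub>R pole_point e r A2 G p"
proof -
  have "outer A A + (outer g g + G) - e r *\<^sub>R mat 1 = (outer A A + outer g g) + G - e r *\<^sub>R mat 1"
    by (simp add: algebra_simps)
  also have "\<dots> = (l *\<^sub>R outer A1 A1 + (1 - l) *\<^sub>R outer A2 A2) + G - e r *\<^sub>R mat 1"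
    by (simp only: assms(2))
  also have "\<dots> = l *\<^sub>R (outer A1 A1 + G - e r *\<^sub>R mat 1) + (1 - l) *\<^sub>R (outer A2 A2 + G - e r *\<^sub>R mat 1)"
    by (simp add: algebra_simps)
  finally have \<sigma>: "outer A A + (outer g g + G) - e r *\<^sub>R mat 1 =
      l *\<^sub>R (outer A1 A1 + G - e r *\<^sub>R mat 1) + (1 - l) *\<^sub>R (outer A2 A2 + G - e r *\<^sub>R mat 1)" .
  have "r *\<^sub>R A = l *\<^sub>R (r *\<^sub>R A1) + (1 - l) *\<^sub>R (r *\<^sub>R A2)"
    unfolding assms(1) by (simp add: algebra_simps)
  moreover have "r = l * r + (1 - l) * r" "p = l * p + (1 - l) * p" by (simp_all add: algebra_simps)
  ultimately show ?thesis
    by (simp add: pole_point_def \<sigma> flip: assms(1))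
qed

lemma trace_sum_list_outer: "trace (\<Sum>g\<leftarrow>gs. outer g g) = (\<Sum>g\<leftarrow>gs. g \<bullet> g)"
  by (induction gs) (simp_all add: trace_add trace_outer trace_def[of 0])

lemma lambda_convex_set_pole_point_sum:
  fixes S :: "('n::finite) zvec set"
  assumes n: "CARD('n) \<ge> 2" and S: "lambda_convex_set S" and c: "0 \<le> c"
    and base: "\<And>A. A \<bullet> A = real CARD('n) * e r \<Longrightarrow> c *\<^sub>R pole_point e r A 0 p + W \<in> S"
  shows "A \<bullet> A + (\<Sum>g\<leftarrow>gs. g \<bullet> g) = real CARD('n) * e r
    \<Longrightarrow> c *\<^sub>R pole_point e r A (\<Sum>g\<leftarrow>gs. outer g g) p + W \<in> S"
proof (induction gs arbitrary: A)
  case Nil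
  then show ?case using base by simp
next
  case (Cons g gs)
  show ?case
  proof (cases "g = 0")
    case True
    then have "outer g g = 0" by (simp add: outer_def vec_eq_iff)
    then show ?thesis using Cons True by simp
  next
    case False
    obtain A1 A2 l where l: "0 \<le> l" "l \<le> 1" and ne: "A1 \<noteq> A2"
      and norm1: "A1 \<bullet> A1 = A \<bullet> A + g \<bullet> g" and norm2: "A2 \<bullet> A2 = A \<bullet> A + g \<bullet> g"
      and comb: "A = l *\<^sub>R A1 + (1 - l) *\<^sub>R A2"
      and outer_comb: "outer A A + outer g g = l *\<^sub>R outer A1 A1 + (1 - l) *\<^sub>R outer A2 A2"
      by (rule rank_one_chord[OF False])
    define G where "G = (\<Sum>g\<leftarrow>gs. outer g g)"
    define z where "z X = c *\<^sub>R pole_point e r X G p + W" for X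
    have z: "z A1 \<in> S" "z A2 \<in> S"
      using Cons norm1 norm2 by (simp_all add: z_def G_def)
    have split: "pole_point e r A (\<Sum>g\<leftarrow>g # gs. outer g g) p =
        l *\<^sub>R pole_point e r A1 G p + (1 - l) *\<^sub>R pole_point e r A2 G p"
      using pole_point_split[OF comb outer_comb] by (simp add: G_def)
    have "c *\<^sub>R pole_point e r A (\<Sum>g\<leftarrow>g # gs. outer g g) p + W = l *\<^sub>R z A1 + (1 - l) *\<^sub>R z A2"
      unfolding split z_def by (simp add: algebra_simps)
    also have "\<dots> \<in> S"
    proof (cases "c = 0")
      case True
      then show ?thesis using z by (simp add: z_def algebra_simps)
    next
      case False
      have "z A1 - z A2 = c *\<^sub>R (pole_point e r A1 G p - pole_point e r A2 G p)"
        by (simp add: z_def algebra_simps)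
      also have "\<dots> \<in> wave_cone"
        using False ne norm1 norm2
        by (intro wave_cone_scaleR pole_point_diff_in_wave_cone[OF n]) simp_all
      finally show ?thesis using lambda_convex_setD[OF S z] l by blast
    qed
    finally show ?thesis .
  qed
qed

lemma pole_mixture_subset_lambda_convex_set:
  fixes S :: "('n::finite) zvec set"
  assumes n: "CARD('n) \<ge> 2" and K: "Kset e \<subseteq> S" and S: "lambda_convex_set S"
  shows "pole_mixture e \<subseteq> S"
proof
  fix z :: "'n zvec" assume "z \<in> pole_mixture e"
  then obtain \<mu> A G B H p1 p2 where \<mu>: "0 \<le> \<mu>" "\<mu> \<le> 1" and G: "psd G" and H: "psd H"
    and A: "A \<bullet> A + trace G = real CARD('n) * e 1" and B: "B \<bullet> B + trace H = real CARD('n) * e (-1)"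
    and z: "z = \<mu> *\<^sub>R pole_point e 1 A G p1 + (1 - \<mu>) *\<^sub>R pole_point e (-1) B H p2"
    unfolding pole_mixture_def by blast
  \<comment> \<open>only the weighted mean of the \<open>p\<close>-components matters; choose them so that the two poles
    differ by a wave-cone vector\<close>
  define q1 where "q1 = \<mu> * p1 + (1 - \<mu>) * p2 + (1 - \<mu>) * (e 1 - e (-1))"
  define q2 where "q2 = \<mu> * p1 + (1 - \<mu>) * p2 - \<mu> * (e 1 - e (-1))"
  have z: "z = \<mu> *\<^sub>R pole_point e 1 A G q1 + (1 - \<mu>) *\<^sub>R pole_point e (-1) B H q2"
    by (simp add: z pole_point_def q1_def q2_def algebra_simps)
  obtain gs hs where gs: "G = (\<Sum>g\<leftarrow>gs. outer g g)" and hs: "H = (\<Sum>h\<leftarrow>hs. outer h h)"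
    using psd_eq_sum_outer_squares G H by metis
  have "\<mu> *\<^sub>R pole_point e 1 A' 0 q1 + (1 - \<mu>) *\<^sub>R pole_point e (-1) B' 0 q2 \<in> S"
    if A': "A' \<bullet> A' = real CARD('n) * e 1" and B': "B' \<bullet> B' = real CARD('n) * e (-1)" for A' B'
  proof -
    have "pole_point e 1 A' 0 q1 - pole_point e (-1) B' 0 q2 \<in> wave_cone"
      using A' B' by (intro pole_point_diff_in_wave_cone[OF n]) (simp_all add: q1_def q2_def algebra_simps)
    moreover have "pole_point e 1 A' 0 q1 \<in> S" "pole_point e (-1) B' 0 q2 \<in> S"
      using K pole_point_in_Kset[of 1 A' e q1] pole_point_in_Kset[of "-1" B' e q2] A' B' by auto
    ultimately show ?thesis using lambda_convex_setD[OF S] \<mu> by blast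
  qed
  then have "\<mu> *\<^sub>R pole_point e 1 A G q1 + (1 - \<mu>) *\<^sub>R pole_point e (-1) B' 0 q2 \<in> S"
    if "B' \<bullet> B' = real CARD('n) * e (-1)" for B'
    using lambda_convex_set_pole_point_sum[OF n S \<mu>(1)] A that by (simp add: gs trace_sum_list_outer)
  then have "(1 - \<mu>) *\<^sub>R pole_point e (-1) B H q2 + \<mu> *\<^sub>R pole_point e 1 A G q1 \<in> S"
    using lambda_convex_set_pole_point_sum[OF n S, of "1 - \<mu>"] \<mu>(2) B
    by (simp add: hs trace_sum_list_outer add.commute)
  then show "z \<in> S" by (simp add: z add.commute)
qed

lemma sum_Pair: "(\<Sum>x\<in>I. (f x, g x)) = (sum f I, sum g I)"
  by (simp add: prod_eq_iff fst_sum snd_sum)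

lemma sum_outer_variance:
  fixes V :: "'i \<Rightarrow> real^'n"
  assumes "sum w I = 1" and "A = (\<Sum>i\<in>I. w i *\<^sub>R V i)"
  shows "(\<Sum>i\<in>I. w i *\<^sub>R outer (V i) (V i)) = outer A A + (\<Sum>i\<in>I. w i *\<^sub>R outer (V i - A) (V i - A))"
proof -
  have "w i *\<^sub>R outer (V i - A) (V i - A) =
      w i *\<^sub>R outer (V i) (V i) - outer (w i *\<^sub>R V i) A - outer A (w i *\<^sub>R V i) + w i *\<^sub>R outer A A" for i
    by (simp add: outer_def vec_eq_iff algebra_simps)
  then have "(\<Sum>i\<in>I. w i *\<^sub>R outer (V i - A) (V i - A)) = (\<Sum>i\<in>I. w i *\<^sub>R outer (V i) (V i))
      - outer (\<Sum>i\<in>I. w i *\<^sub>R V i) A - outer A (\<Sum>i\<in>I. w i *\<^sub>R V i) + (\<Sum>i\<in>I. w i) *\<^sub>R outer A A"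
    by (simp add: sum.distrib sum_subtractf scaleR_sum_left outer_sum_left outer_sum_right)
  then show ?thesis using assms by simp
qed

lemma sum_pole_points:
  fixes V :: "'i \<Rightarrow> real^'n::finite"
  assumes u: "\<And>i. i \<in> I \<Longrightarrow> 0 \<le> u i" and V: "\<And>i. i \<in> I \<Longrightarrow> V i \<bullet> V i = real CARD('n) * e r"
    and er: "0 \<le> e r"
  obtains A G q where "psd G" "A \<bullet> A + trace G = real CARD('n) * e r"
    "(\<Sum>i\<in>I. u i *\<^sub>R pole_point e r (V i) 0 (p i)) = sum u I *\<^sub>R pole_point e r A G q"
proof (cases "sum u I = 0")
  case True
  have "(\<Sum>i\<in>I. u i *\<^sub>R pole_point e r (V i) 0 (p i)) = 0"
  proof (cases "finite I")
    case True
    then show ?thesis using \<open>sum u I = 0\<close> u by (simp add: sum_nonneg_eq_0_iff)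
  qed simp
  moreover obtain j :: 'n where True by blast
  define A0 where "A0 = sqrt (real CARD('n) * e r) *\<^sub>R axis j (1::real)"
  have "A0 \<bullet> A0 + trace 0 = real CARD('n) * e r"
    using er by (simp add: A0_def inner_axis_axis trace_def flip: mult.assoc)
  ultimately show thesis using that[OF psd_zero, of A0 0] True by simp
next
  case False
  define \<mu> where "\<mu> = sum u I"
  have fin: "finite I" using False sum.infinite by blast
  define w where "w i = u i / \<mu>" for i
  have sw: "sum w I = 1" using False by (simp add: w_def \<mu>_def sum_divide_distrib[symmetric])
  define A where "A = (\<Sum>i\<in>I. w i *\<^sub>R V i)"
  define G where "G = (\<Sum>i\<in>I. w i *\<^sub>R outer (V i - A) (V i - A))"
  define q where "q = (\<Sum>i\<in>I. w i * p i)"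
  have \<mu>: "\<mu> > 0" using False u sum_nonneg[of I u] by (simp add: \<mu>_def order_less_le)
  have "psd G"
    unfolding G_def using u \<mu> by (intro psd_sum psd_scaleR psd_outer) (simp add: w_def)
  have outer_mean: "(\<Sum>i\<in>I. w i *\<^sub>R outer (V i) (V i)) = outer A A + G"
    unfolding G_def by (rule sum_outer_variance[OF sw A_def])
  have "A \<bullet> A + trace G = trace (\<Sum>i\<in>I. w i *\<^sub>R outer (V i) (V i))"
    by (simp add: outer_mean trace_add trace_outer)
  also have "\<dots> = (\<Sum>i\<in>I. w i) * (real CARD('n) * e r)"
    using V by (simp add: trace_sum trace_scaleR trace_outer sum_distrib_right)
  finally have norm: "A \<bullet> A + trace G = real CARD('n) * e r" using sw by simp
  have "(\<Sum>i\<in>I. w i *\<^sub>R pole_point e r (V i) 0 (p i)) =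
      (\<Sum>i\<in>I. w i * r, A, \<Sum>i\<in>I. w i *\<^sub>R (r *\<^sub>R V i),
       \<Sum>i\<in>I. w i *\<^sub>R (outer (V i) (V i) - e r *\<^sub>R mat 1), q)"
    by (simp add: pole_point_def sum_Pair A_def q_def)
  also have "\<dots> = pole_point e r A G q"
  proof -
    have "(\<Sum>i\<in>I. w i * r) = r" using sw by (simp flip: sum_distrib_right)
    moreover have "(\<Sum>i\<in>I. w i *\<^sub>R (r *\<^sub>R V i)) = r *\<^sub>R A"
      by (simp add: A_def scaleR_sum_right mult.commute)
    moreover have "(\<Sum>i\<in>I. w i *\<^sub>R (outer (V i) (V i) - e r *\<^sub>R mat 1)) = outer A A + G - e r *\<^sub>R mat 1"
      using outer_mean sw
      by (simp add: scaleR_diff_right sum_subtractf flip: scaleR_sum_left sum_distrib_right)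
    ultimately show ?thesis by (simp add: pole_point_def)
  qed
  finally have mean: "(\<Sum>i\<in>I. w i *\<^sub>R pole_point e r (V i) 0 (p i)) = pole_point e r A G q" .
  have "(\<Sum>i\<in>I. u i *\<^sub>R pole_point e r (V i) 0 (p i)) = \<mu> *\<^sub>R (\<Sum>i\<in>I. w i *\<^sub>R pole_point e r (V i) 0 (p i))"
    using \<mu> by (simp add: w_def scaleR_sum_right)
  then have "(\<Sum>i\<in>I. u i *\<^sub>R pole_point e r (V i) 0 (p i)) = sum u I *\<^sub>R pole_point e r A G q"
    by (simp add: mean \<mu>_def)
  then show thesis by (rule that[OF \<open>psd G\<close> norm])
qed

lemma convex_hull_Kset_subset_pole_mixture:
  assumes "0 \<le> e 1" "0 \<le> e (-1)"
  shows "convex hull (Kset e) \<subseteq> (pole_mixture e :: ('n::finite) zvec set)"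
proof
  fix z :: "'n zvec" assume "z \<in> convex hull (Kset e)"
  then obtain S u where fin: "finite S" and SK: "S \<subseteq> Kset e" and u: "\<forall>k\<in>S. 0 \<le> u k"
    and su: "sum u S = 1" and z: "(\<Sum>k\<in>S. u k *\<^sub>R k) = z"
    unfolding convex_hull_explicit by blast
  define V where "V k = fst (snd k)" for k :: "'n zvec"
  define P where "P k = snd (snd (snd (snd k)))" for k :: "'n zvec"
  define Sp where "Sp = {k\<in>S. fst k = 1}"
  define Sm where "Sm = {k\<in>S. fst k = -1}"
  have K: "pole_point e (fst k) (V k) 0 (P k) = k \<and> (fst k = 1 \<or> fst k = -1)
      \<and> V k \<bullet> V k = real CARD('n) * e (fst k)" if "k \<in> S" for k
    using SK that by (auto simp: Kset_eq pole_point_def V_def P_def)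
  have "S = Sp \<union> Sm"
  proof
    show "S \<subseteq> Sp \<union> Sm"
    proof
      fix k assume "k \<in> S"
      then show "k \<in> Sp \<union> Sm" using K[of k] by (simp add: Sp_def Sm_def)
    qed
  qed (simp add: Sp_def Sm_def)
  moreover have "Sp \<inter> Sm = {}" "finite Sp" "finite Sm" using fin by (auto simp: Sp_def Sm_def)
  ultimately have S: "S = Sp \<union> Sm" "Sp \<inter> Sm = {}" "finite Sp" "finite Sm" by blast+
  have up: "0 \<le> u k" and Vp: "V k \<bullet> V k = real CARD('n) * e 1" if "k \<in> Sp" for k
    using u K[of k] that by (auto simp: Sp_def)
  obtain A G q1 where A: "psd G" "A \<bullet> A + trace G = real CARD('n) * e 1"
    and sum_p: "(\<Sum>k\<in>Sp. u k *\<^sub>R pole_point e 1 (V k) 0 (P k)) = sum u Sp *\<^sub>R pole_point e 1 A G q1"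
    by (rule sum_pole_points[where e = e and r = 1 and p = P, OF up Vp assms(1)])
  have um: "0 \<le> u k" and Vm: "V k \<bullet> V k = real CARD('n) * e (-1)" if "k \<in> Sm" for k
    using u K[of k] that by (auto simp: Sm_def)
  obtain B H q2 where B: "psd H" "B \<bullet> B + trace H = real CARD('n) * e (-1)"
    and sum_m: "(\<Sum>k\<in>Sm. u k *\<^sub>R pole_point e (-1) (V k) 0 (P k)) = sum u Sm *\<^sub>R pole_point e (-1) B H q2"
    by (rule sum_pole_points[where e = e and r = "-1" and p = P, OF um Vm assms(2)])
  have "z = (\<Sum>k\<in>Sp \<union> Sm. u k *\<^sub>R k)" using z S(1) by simp
  also have "\<dots> = (\<Sum>k\<in>Sp. u k *\<^sub>R k) + (\<Sum>k\<in>Sm. u k *\<^sub>R k)"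
    by (rule sum.union_disjoint[OF S(3) S(4) S(2)])
  also have "(\<Sum>k\<in>Sp. u k *\<^sub>R k) = (\<Sum>k\<in>Sp. u k *\<^sub>R pole_point e 1 (V k) 0 (P k))"
  proof (rule sum.cong)
    fix k assume "k \<in> Sp"
    then show "u k *\<^sub>R k = u k *\<^sub>R pole_point e 1 (V k) 0 (P k)" using K[of k] by (simp add: Sp_def)
  qed simp
  also have "(\<Sum>k\<in>Sm. u k *\<^sub>R k) = (\<Sum>k\<in>Sm. u k *\<^sub>R pole_point e (-1) (V k) 0 (P k))"
  proof (rule sum.cong)
    fix k assume "k \<in> Sm"
    then show "u k *\<^sub>R k = u k *\<^sub>R pole_point e (-1) (V k) 0 (P k)" using K[of k] by (simp add: Sm_def)
  qed simp
  also note sum_p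
  also note sum_m
  finally have "z = sum u Sp *\<^sub>R pole_point e 1 A G q1 + (1 - sum u Sp) *\<^sub>R pole_point e (-1) B H q2"
    using su S sum.union_disjoint[of Sp Sm u] by simp
  moreover have "0 \<le> sum u Sp" "sum u Sp \<le> 1"
    using su S u sum.union_disjoint[of Sp Sm u] sum_nonneg[of Sm u] sum_nonneg[of Sp u] by auto
  ultimately show "z \<in> pole_mixture e"
    unfolding pole_mixture_def using A B by blast
qed

lemma norm_scaleR_inverse_sq: "(norm ((1 / c) *\<^sub>R x))\<^sup>2 = (norm x)\<^sup>2 / c\<^sup>2"
  by (simp add: power_mult_distrib power_divide)

lemma Tplus_eq:
  fixes v m :: "real^'n::finite"
  shows "Tplus (r, v, m, \<sigma>, p) = (norm ((1 / (1 + r)) *\<^sub>R (v + m)))\<^sup>2 / real CARD('n)"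
  unfolding norm_scaleR_inverse_sq by (simp add: Tplus_def add.commute mult.commute)

lemma Tminus_eq:
  fixes v m :: "real^'n::finite"
  shows "Tminus (r, v, m, \<sigma>, p) = (norm ((1 / (1 - r)) *\<^sub>R (v - m)))\<^sup>2 / real CARD('n)"
proof -
  have "(norm (m - v))\<^sup>2 = (norm (v - m))\<^sup>2" "(r - 1)\<^sup>2 = (1 - r)\<^sup>2"
    by (simp_all add: norm_minus_commute power2_commute)
  then show ?thesis unfolding norm_scaleR_inverse_sq by (simp add: Tminus_def mult.commute)
qed

lemma quotient_split_two_squares:
  fixes s d x y a b :: real
  assumes "s \<noteq> 0" "d \<noteq> 0"
  shows "((s + d) / 2 * (x * y + a * b) - (s - d) / 2 * (a * y + x * b)) / (s * d) =
      s / 2 * ((x + a) / s * ((y + b) / s)) + d / 2 * ((x - a) / d * ((y - b) / d))"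
  using assms by (simp add: field_simps)

lemma Mmat_eq:
  fixes v m :: "real^'n::finite"
  assumes "-1 < r" "r < 1"
  shows "Mmat (r, v, m, \<sigma>, p) =
      ((1 + r) / 2) *\<^sub>R outer ((1 / (1 + r)) *\<^sub>R (v + m)) ((1 / (1 + r)) *\<^sub>R (v + m))
    + ((1 - r) / 2) *\<^sub>R outer ((1 / (1 - r)) *\<^sub>R (v - m)) ((1 / (1 - r)) *\<^sub>R (v - m)) - \<sigma>"
proof -
  have "(1 + r) * (1 - r) = 1 - r\<^sup>2" by (simp add: power2_eq_square algebra_simps)
  then have "(x * y - r * (a * y + x * b) + a * b) / (1 - r\<^sup>2) =
      (1 + r) / 2 * ((x + a) / (1 + r) * ((y + b) / (1 + r)))
    + (1 - r) / 2 * ((x - a) / (1 - r) * ((y - b) / (1 - r)))" for x y a b :: real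
    using quotient_split_two_squares[of "1 + r" "1 - r" x y a b] assms by (simp add: algebra_simps)
  then show ?thesis
    by (simp add: Mmat_def outer_def vec_eq_iff)
qed

lemma pole_point_in_Zspace:
  "psd G \<Longrightarrow> A \<bullet> A + trace G = real CARD('n) * e r \<Longrightarrow> pole_point e r A G p \<in> (Zspace :: ('n::finite) zvec set)"
  by (simp add: pole_point_def Zspace_def psd_def transpose_add transpose_diff transpose_outer
      transpose_scalar trace_add trace_sub trace_outer trace_scaleR trace_I mult.commute)

lemma pole_mixture_subset_Zspace: "pole_mixture e \<subseteq> (Zspace :: ('n::finite) zvec set)"
proof
  fix z :: "'n zvec" assume "z \<in> pole_mixture e"
  then obtain \<mu> A G B H p1 p2 where \<mu>: "0 \<le> \<mu>" "\<mu> \<le> 1" and GH: "psd G" "psd H"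
    and norms: "A \<bullet> A + trace G = real CARD('n) * e 1" "B \<bullet> B + trace H = real CARD('n) * e (-1)"
    and z: "z = \<mu> *\<^sub>R pole_point e 1 A G p1 + (1 - \<mu>) *\<^sub>R pole_point e (-1) B H p2"
    unfolding pole_mixture_def by blast
  have "pole_point e 1 A G p1 \<in> Zspace" "pole_point e (-1) B H p2 \<in> Zspace"
    using pole_point_in_Zspace GH norms by blast+
  then show "z \<in> Zspace"
    using convexD[OF convex_Zspace, of _ _ \<mu> "1 - \<mu>"] \<mu> z by simp
qed

lemma pole_mixture_tuple:
  "\<mu> *\<^sub>R pole_point e 1 A G p1 + (1 - \<mu>) *\<^sub>R pole_point e (-1) B H p2 =
    (2 * \<mu> - 1, \<mu> *\<^sub>R A + (1 - \<mu>) *\<^sub>R B, \<mu> *\<^sub>R A - (1 - \<mu>) *\<^sub>R B,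
     \<mu> *\<^sub>R (outer A A + G) + (1 - \<mu>) *\<^sub>R (outer B B + H) - (\<mu> * e 1 + (1 - \<mu>) * e (-1)) *\<^sub>R mat 1,
     \<mu> * p1 + (1 - \<mu>) * p2)"
  by (simp add: pole_point_def algebra_simps)

lemma Uset_subset_pole_mixture:
  assumes aff: "\<And>r. e r = a * r + b"
  shows "Uset e \<subseteq> (pole_mixture e :: ('n::finite) zvec set)"
proof
  fix z :: "'n zvec" assume "z \<in> Uset e"
  then obtain r v m \<sigma> p where z: "z = (r, v, m, \<sigma>, p)" and \<sigma>: "transpose \<sigma> = \<sigma>" "trace \<sigma> = 0"
    and r: "-1 < r" "r < 1" and T: "Tplus z < e 1" "Tminus z < e (-1)" and Q: "Qfun z < e r"
    by (cases z) (auto simp: Uset_def Zspace_def)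
  define \<mu> where "\<mu> = (1 + r) / 2"
  define A where "A = (1 / (1 + r)) *\<^sub>R (v + m)"
  define B where "B = (1 / (1 - r)) *\<^sub>R (v - m)"
  have \<mu>: "0 < \<mu>" "\<mu> < 1" "(1 - r) / 2 = 1 - \<mu>" using r by (simp_all add: \<mu>_def field_simps)
  have M: "Mmat z = \<mu> *\<^sub>R outer A A + (1 - \<mu>) *\<^sub>R outer B B - \<sigma>"
    using Mmat_eq[OF r] by (simp add: z A_def B_def \<mu>_def \<mu>(3))
  have "transpose (Mmat z) = Mmat z"
    by (simp add: M transpose_add transpose_diff transpose_scalar transpose_outer \<sigma>)
  define P where "P = e r *\<^sub>R mat 1 - Mmat z"
  have "psd P" unfolding P_def
    by (rule psd_lambda_max_le[OF \<open>transpose (Mmat z) = Mmat z\<close>]) (use Q in \<open>simp add: Qfun_def\<close>)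
  define \<tau>1 where "\<tau>1 = real CARD('n) * e 1 - A \<bullet> A"
  define \<tau>2 where "\<tau>2 = real CARD('n) * e (-1) - B \<bullet> B"
  have "(norm A)\<^sup>2 / real CARD('n) < e 1" "(norm B)\<^sup>2 / real CARD('n) < e (-1)"
    using T by (simp_all add: z Tplus_eq Tminus_eq A_def B_def)
  then have \<tau>: "\<tau>1 > 0" "\<tau>2 > 0"
    by (simp_all add: \<tau>1_def \<tau>2_def power2_norm_eq_inner pos_divide_less_eq mult.commute)
  have er: "e r = \<mu> * e 1 + (1 - \<mu>) * e (-1)"
    unfolding aff \<mu>_def by (simp add: field_simps)
  have trP: "trace P = \<mu> * \<tau>1 + (1 - \<mu>) * \<tau>2"
    by (simp add: P_def M trace_add trace_sub trace_scaleR trace_outer trace_I \<sigma> er \<tau>1_def \<tau>2_def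
        algebra_simps)
  then have "trace P > 0" using \<mu> \<tau> by (simp add: add_pos_pos)
  define G where "G = (\<tau>1 / trace P) *\<^sub>R P"
  define H where "H = (\<tau>2 / trace P) *\<^sub>R P"
  have GH: "psd G" "psd H" using \<open>psd P\<close> \<tau> \<open>trace P > 0\<close> by (simp_all add: G_def H_def psd_scaleR)
  have norms: "A \<bullet> A + trace G = real CARD('n) * e 1" "B \<bullet> B + trace H = real CARD('n) * e (-1)"
    using \<open>trace P > 0\<close> by (simp_all add: G_def H_def trace_scaleR \<tau>1_def \<tau>2_def)
  have "\<mu> *\<^sub>R G + (1 - \<mu>) *\<^sub>R H = ((\<mu> * \<tau>1 + (1 - \<mu>) * \<tau>2) / trace P) *\<^sub>R P"
    by (simp add: G_def H_def add_divide_distrib scaleR_add_left)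
  then have GH_P: "\<mu> *\<^sub>R G + (1 - \<mu>) *\<^sub>R H = P" using trP \<open>trace P > 0\<close> by simp
  have "\<mu> * (1 / (1 + r)) = 1 / 2" "(1 - \<mu>) * (1 / (1 - r)) = 1 / 2"
    using r by (simp_all add: \<mu>_def field_simps)
  then have halves: "\<mu> *\<^sub>R A = (1 / 2) *\<^sub>R (v + m)" "(1 - \<mu>) *\<^sub>R B = (1 / 2) *\<^sub>R (v - m)"
    by (simp_all only: A_def B_def scaleR_scaleR)
  have "\<mu> *\<^sub>R A + (1 - \<mu>) *\<^sub>R B = v" "\<mu> *\<^sub>R A - (1 - \<mu>) *\<^sub>R B = m"
    unfolding halves by (simp_all add: vec_eq_iff field_simps)
  moreover have "\<mu> *\<^sub>R (outer A A + G) + (1 - \<mu>) *\<^sub>R (outer B B + H)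
      - (\<mu> * e 1 + (1 - \<mu>) * e (-1)) *\<^sub>R mat 1 = \<sigma>"
  proof -
    have AB: "\<mu> *\<^sub>R outer A A + (1 - \<mu>) *\<^sub>R outer B B = Mmat z + \<sigma>" using M by simp
    have "\<mu> *\<^sub>R (outer A A + G) + (1 - \<mu>) *\<^sub>R (outer B B + H)
        - (\<mu> * e 1 + (1 - \<mu>) * e (-1)) *\<^sub>R mat 1
      = (\<mu> *\<^sub>R outer A A + (1 - \<mu>) *\<^sub>R outer B B) + (\<mu> *\<^sub>R G + (1 - \<mu>) *\<^sub>R H) - e r *\<^sub>R mat 1"
      by (simp add: er algebra_simps)
    also have "\<dots> = \<sigma>" unfolding AB GH_P by (simp add: P_def)
    finally show ?thesis .
  qed
  moreover have "2 * \<mu> - 1 = r" "\<mu> * p + (1 - \<mu>) * p = p" by (simp_all add: \<mu>_def algebra_simps)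
  ultimately have "z = \<mu> *\<^sub>R pole_point e 1 A G p + (1 - \<mu>) *\<^sub>R pole_point e (-1) B H p"
    by (simp add: pole_mixture_tuple z)
  then show "z \<in> pole_mixture e"
    unfolding pole_mixture_def using \<mu> GH norms by fastforce
qed

lemma norm_scaleR_sq: "(norm (k *\<^sub>R x))\<^sup>2 = k\<^sup>2 * (x \<bullet> x)"
proof -
  have "(norm (k *\<^sub>R x))\<^sup>2 = (k *\<^sub>R x) \<bullet> (k *\<^sub>R x)" by (rule power2_norm_eq_inner)
  then show ?thesis by (simp add: power2_eq_square)
qed

lemma inner_mult_vec_add: "x \<bullet> ((P + Q) *v x) = x \<bullet> (P *v x) + x \<bullet> (Q *v x)"
  by (simp add: matrix_vector_mult_add_rdistrib inner_add_right)

lemma inner_mult_vec_diff: "x \<bullet> ((P - Q) *v x) = x \<bullet> (P *v x) - x \<bullet> (Q *v (x::real^'n))"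
  by (simp add: matrix_vector_mult_diff_rdistrib inner_diff_right)

lemma inner_mult_vec_scaleR: "x \<bullet> ((c *\<^sub>R P) *v x) = c * (x \<bullet> (P *v (x::real^'n)))"
  by (simp add: scaleR_mult_vec)

lemma shrink_sq_mult_less:
  fixes c u X N :: real
  assumes "0 \<le> c" "c < u" "X \<le> N" "0 < N"
  shows "(c / u)\<^sup>2 * X < N"
proof -
  have k: "0 \<le> (c / u)\<^sup>2" "(c / u)\<^sup>2 < 1"
    using assms by (simp_all add: power_less_one_iff abs_less_iff)
  then have "(c / u)\<^sup>2 * X \<le> (c / u)\<^sup>2 * N" using assms(3) by (simp add: mult_left_mono)
  also have "\<dots> < N" using k assms(4) by simp
  finally show ?thesis .
qed

lemma perspective_sq_le:
  fixes c u X :: real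
  assumes "0 \<le> c" "c \<le> u" "0 < u"
  shows "u / 2 * (c / u * X)\<^sup>2 \<le> c / 2 * X\<^sup>2"
proof -
  have "u / 2 * (c / u * X)\<^sup>2 = c / 2 * X\<^sup>2 * (c / u)"
    using assms by (simp add: power2_eq_square field_simps)
  also have "\<dots> \<le> c / 2 * X\<^sup>2 * 1"
    using assms by (intro mult_left_mono) simp_all
  finally show ?thesis by simp
qed

lemma pole_mixture_shrink_in_Uset:
  fixes z :: "('n::finite) zvec"
  assumes aff: "\<And>r. e r = a * r + b" and e1: "e 1 > 0" and em: "e (-1) > 0"
    and z: "z \<in> pole_mixture e" and t: "0 < t" "t \<le> 1"
  shows "(1 - t) *\<^sub>R z + t *\<^sub>R (0, 0, 0, 0, snd (snd (snd (snd z)))) \<in> Uset e"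
proof -
  obtain \<mu> A G B H p1 p2 where \<mu>: "0 \<le> \<mu>" "\<mu> \<le> 1" and GH: "psd G" "psd H"
    and norms: "A \<bullet> A + trace G = real CARD('n) * e 1" "B \<bullet> B + trace H = real CARD('n) * e (-1)"
    and zdef: "z = \<mu> *\<^sub>R pole_point e 1 A G p1 + (1 - \<mu>) *\<^sub>R pole_point e (-1) B H p2"
    using z unfolding pole_mixture_def by blast
  define s where "s = 1 - t"
  define c where "c = 2 * s * \<mu>"
  define c' where "c' = 2 * s * (1 - \<mu>)"
  define E where "E = \<mu> * e 1 + (1 - \<mu>) * e (-1)"
  define \<sigma> where "\<sigma> = \<mu> *\<^sub>R (outer A A + G) + (1 - \<mu>) *\<^sub>R (outer B B + H) - E *\<^sub>R mat 1"
  define r where "r = s * (2 * \<mu> - 1)"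
  define v where "v = s *\<^sub>R (\<mu> *\<^sub>R A + (1 - \<mu>) *\<^sub>R B)"
  define m where "m = s *\<^sub>R (\<mu> *\<^sub>R A - (1 - \<mu>) *\<^sub>R B)"
  define pz where "pz = \<mu> * p1 + (1 - \<mu>) * p2"
  have s: "0 \<le> s" "s < 1" using t by (simp_all add: s_def)
  have cc: "0 \<le> c" "0 \<le> c'" using s \<mu> by (simp_all add: c_def c'_def)
  have ztuple: "z = (2 * \<mu> - 1, \<mu> *\<^sub>R A + (1 - \<mu>) *\<^sub>R B, \<mu> *\<^sub>R A - (1 - \<mu>) *\<^sub>R B, \<sigma>, pz)"
    by (simp add: zdef pole_mixture_tuple \<sigma>_def E_def pz_def)
  have shrunk: "(1 - t) *\<^sub>R z + t *\<^sub>R (0, 0, 0, 0, snd (snd (snd (snd z)))) = (r, v, m, s *\<^sub>R \<sigma>, pz)"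
    by (simp add: ztuple s_def r_def v_def m_def algebra_simps)
  have r: "1 + r = c + t" "1 - r = c' + t" "-1 < r" "r < 1"
    using t cc by (simp_all add: r_def c_def c'_def s_def algebra_simps)
  have "v + m = c *\<^sub>R A" "v - m = c' *\<^sub>R B"
    by (simp_all add: v_def m_def c_def c'_def vec_eq_iff algebra_simps)
  then have vm: "(1 / (c + t)) *\<^sub>R (v + m) = (c / (c + t)) *\<^sub>R A"
    "(1 / (c' + t)) *\<^sub>R (v - m) = (c' / (c' + t)) *\<^sub>R B"
    by simp_all
  have "z \<in> Zspace" using z pole_mixture_subset_Zspace by blast
  then have "transpose \<sigma> = \<sigma>" "trace \<sigma> = 0" by (simp_all add: ztuple Zspace_def)
  then have Z: "(r, v, m, s *\<^sub>R \<sigma>, pz) \<in> Zspace"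
    by (simp add: Zspace_def transpose_scalar trace_scaleR)
  have "A \<bullet> A \<le> real CARD('n) * e 1" "B \<bullet> B \<le> real CARD('n) * e (-1)"
    using norms trace_nonneg_psd[OF GH(1)] trace_nonneg_psd[OF GH(2)] by linarith+
  then have "(c / (c + t))\<^sup>2 * (A \<bullet> A) < real CARD('n) * e 1"
    "(c' / (c' + t))\<^sup>2 * (B \<bullet> B) < real CARD('n) * e (-1)"
    using shrink_sq_mult_less[of c "c + t"] shrink_sq_mult_less[of c' "c' + t"] cc t e1 em by simp_all
  then have T: "Tplus (r, v, m, s *\<^sub>R \<sigma>, pz) < e 1" "Tminus (r, v, m, s *\<^sub>R \<sigma>, pz) < e (-1)"
    unfolding Tplus_eq Tminus_eq r(1,2) vm norm_scaleR_sq by (simp_all add: pos_divide_less_eq mult.commute)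
  have "Qfun (r, v, m, s *\<^sub>R \<sigma>, pz) < e r"
  proof -
    define M where "M = Mmat (r, v, m, s *\<^sub>R \<sigma>, pz)"
    have M_eq: "M = ((c + t) / 2) *\<^sub>R outer ((c / (c + t)) *\<^sub>R A) ((c / (c + t)) *\<^sub>R A)
        + ((c' + t) / 2) *\<^sub>R outer ((c' / (c' + t)) *\<^sub>R B) ((c' / (c' + t)) *\<^sub>R B) - s *\<^sub>R \<sigma>"
      using Mmat_eq[OF r(3,4), of v m "s *\<^sub>R \<sigma>" pz] unfolding M_def r(1,2) vm .
    have "transpose M = M"
      using \<open>transpose \<sigma> = \<sigma>\<close>
      by (simp add: M_eq transpose_add transpose_diff transpose_scalar transpose_outer)
    have "b > 0" using e1 em aff[of 1] aff[of "-1"] by simp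
    have sE: "s * E = e r - t * b" unfolding aff E_def r_def s_def by (simp add: algebra_simps)
    show ?thesis unfolding Qfun_def M_def[symmetric]
    proof (rule lambda_max_less[OF \<open>transpose M = M\<close>])
      fix \<xi> :: "real^'n" assume "\<xi> \<noteq> 0"
      define X where "X = A \<bullet> \<xi>"
      define Y where "Y = B \<bullet> \<xi>"
      have g: "0 \<le> \<xi> \<bullet> (G *v \<xi>)" "0 \<le> \<xi> \<bullet> (H *v \<xi>)" using GH by (simp_all add: psd_def)
      have q\<sigma>: "\<xi> \<bullet> (\<sigma> *v \<xi>) = \<mu> * (X\<^sup>2 + \<xi> \<bullet> (G *v \<xi>)) + (1 - \<mu>) * (Y\<^sup>2 + \<xi> \<bullet> (H *v \<xi>))
          - E * (\<xi> \<bullet> \<xi>)"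
        unfolding \<sigma>_def inner_mult_vec_add inner_mult_vec_diff inner_mult_vec_scaleR inner_outer_mult_vec
        by (simp add: X_def Y_def power2_eq_square)
      have "\<xi> \<bullet> (M *v \<xi>) = (c + t) / 2 * (c / (c + t) * X)\<^sup>2 + (c' + t) / 2 * (c' / (c' + t) * Y)\<^sup>2
          - s * (\<xi> \<bullet> (\<sigma> *v \<xi>))"
        unfolding M_eq inner_mult_vec_add inner_mult_vec_diff inner_mult_vec_scaleR inner_outer_mult_vec
        by (simp add: X_def Y_def power2_eq_square)
      also have "\<dots> \<le> c / 2 * X\<^sup>2 + c' / 2 * Y\<^sup>2 - s * (\<xi> \<bullet> (\<sigma> *v \<xi>))"
        using perspective_sq_le[of c "c + t" X] perspective_sq_le[of c' "c' + t" Y] cc t by simp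
      also have "\<dots> = s * E * (\<xi> \<bullet> \<xi>) - s * \<mu> * (\<xi> \<bullet> (G *v \<xi>)) - s * (1 - \<mu>) * (\<xi> \<bullet> (H *v \<xi>))"
        unfolding q\<sigma> c_def c'_def by (simp add: field_simps)
      also have "\<dots> \<le> s * E * (\<xi> \<bullet> \<xi>)"
      proof -
        have "0 \<le> s * \<mu> * (\<xi> \<bullet> (G *v \<xi>))" "0 \<le> s * (1 - \<mu>) * (\<xi> \<bullet> (H *v \<xi>))"
          using g s \<mu> by simp_all
        then show ?thesis by linarith
      qed
      also have "\<dots> = e r * (\<xi> \<bullet> \<xi>) - t * b * (\<xi> \<bullet> \<xi>)"
        unfolding sE by (simp add: algebra_simps)
      also have "\<dots> < e r * (\<xi> \<bullet> \<xi>)"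
        using \<open>\<xi> \<noteq> 0\<close> \<open>b > 0\<close> t by simp
      finally show "\<xi> \<bullet> (M *v \<xi>) < e r * (\<xi> \<bullet> \<xi>)" .
    qed
  qed
  then show ?thesis unfolding shrunk Uset_def using Z r T by simp
qed

lemma pole_mixture_subset_closure_Uset:
  assumes aff: "\<And>r. e r = a * r + b" and "e 1 > 0" and "e (-1) > 0"
  shows "pole_mixture e \<subseteq> closure (Uset e :: ('n::finite) zvec set)"
proof
  fix z :: "'n zvec" assume z: "z \<in> pole_mixture e"
  define z0 :: "'n zvec" where "z0 = (0, 0, 0, 0, snd (snd (snd (snd z))))"
  define x where "x k = (1 - inverse (real (Suc k))) *\<^sub>R z + inverse (real (Suc k)) *\<^sub>R z0" for k
  have "x k \<in> Uset e" for k
    unfolding x_def z0_def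
    by (rule pole_mixture_shrink_in_Uset[OF aff assms(2,3) z]) (simp_all add: inverse_le_1_iff)
  moreover have "x \<longlonglongrightarrow> (1 - 0) *\<^sub>R z + 0 *\<^sub>R z0"
    unfolding x_def by (intro tendsto_intros LIMSEQ_inverse_real_of_nat)
  ultimately show "z \<in> closure (Uset e)"
    unfolding closure_sequential by auto
qed

lemma closed_convex_hull_Kset:
  assumes "0 \<le> e 1" "0 \<le> e (-1)"
  shows "closed (convex hull (Kset e :: ('n::finite) zvec set))"
proof -
  define L :: "'n zvec set" where "L = range (\<lambda>q. q *\<^sub>R (0, 0, 0, 0, 1))"
  define S :: "real \<Rightarrow> 'n zvec set"
    where "S r = (\<lambda>A. pole_point e r A 0 0) ` sphere 0 (sqrt (real CARD('n) * e r))" for r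
  have split: "pole_point e r A 0 p = pole_point e r A 0 0 + (0, 0, 0, 0, p)" for r A p
    by (simp add: pole_point_def)
  have "Kset e = (S 1 \<union> S (-1)) + L"
  proof (intro set_eqI iffI)
    fix k :: "'n zvec" assume "k \<in> Kset e"
    then obtain r A p where r: "r = 1 \<or> r = -1" and A: "A \<bullet> A = real CARD('n) * e r"
      and k: "k = pole_point e r A 0 p"
      by (auto simp: Kset_eq)
    have "pole_point e r A 0 0 \<in> S 1 \<union> S (-1)"
      using r A by (auto simp: S_def norm_eq_sqrt_inner)
    moreover have "(0, 0, 0, 0, p) \<in> L" by (auto simp: L_def intro!: image_eqI[where x = p])
    ultimately show "k \<in> (S 1 \<union> S (-1)) + L"
      unfolding k split[of r A p] by (rule set_plus_intro)
  next
    fix k assume "k \<in> (S 1 \<union> S (-1)) + L"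
    then obtain x y where k: "k = x + y" and x: "x \<in> S 1 \<union> S (-1)" and y: "y \<in> L"
      by (rule set_plus_elim)
    from x obtain r where r: "r = 1 \<or> r = -1" and xr: "x \<in> S r" by blast
    from xr obtain A where x: "x = pole_point e r A 0 0" and A: "A \<in> sphere 0 (sqrt (real CARD('n) * e r))"
      unfolding S_def by (rule imageE)
    from y obtain q where y: "y = (0, 0, 0, 0, q)" unfolding L_def by auto
    have "A \<bullet> A = real CARD('n) * e r"
      using A r assms by (auto simp: norm_eq_sqrt_inner)
    then show "k \<in> Kset e"
      using r pole_point_in_Kset[of r A e q] unfolding k x y split[of r A q, symmetric] by simp
  qed
  moreover have compact_S: "compact (S r)" for r
    unfolding S_def pole_point_def outer_def by (intro compact_continuous_image continuous_intros) simp
  moreover have "subspace L"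
    unfolding L_def by (metis span_singleton subspace_span)
  then have "convex hull L = L" by (simp add: convex_hull_eq subspace_imp_convex)
  ultimately have "convex hull (Kset e) = convex hull (S 1 \<union> S (-1)) + L"
    by (simp add: convex_hull_set_plus)
  also have "\<dots> = (\<Union>x\<in>convex hull (S 1 \<union> S (-1)). \<Union>y\<in>L. {x + y})"
    by (auto simp: set_plus_def)
  finally show ?thesis
    using compact_closed_sums[OF compact_convex_hull closed_subspace[OF \<open>subspace L\<close>]]
      compact_Un[OF compact_S compact_S] by simp
qed

lemma lambda_hull_subset_closure_convex_hull:
  "lambda_hull K \<subseteq> closure (convex hull (K :: ('n::finite) zvec set))"
proof
  fix z assume z: "z \<in> lambda_hull K"
  show "z \<in> closure (convex hull K)"
  proof (rule ccontr)
    assume "z \<notin> closure (convex hull K)"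
    then obtain w c where wz: "w \<bullet> z < c" and wK: "\<forall>x\<in>closure (convex hull K). c < w \<bullet> x"
      using separating_hyperplane_closed_point[OF convex_closure[OF convex_convex_hull] closed_closure]
      by blast
    have "lambda_convex (\<lambda>x. - (w \<bullet> x))"
      unfolding lambda_convex_def convex_on_def
      by (simp add: inner_add_right algebra_simps flip: distrib_right)
    moreover have "\<forall>h. lambda_convex h \<longrightarrow> ereal (h z) \<le> (SUP k\<in>K. ereal (h k))"
      using z by (simp add: lambda_hull_def)
    ultimately have "ereal (- (w \<bullet> z)) \<le> (SUP k\<in>K. ereal (- (w \<bullet> k)))" by blast
    also have "\<dots> \<le> ereal (- c)"
    proof (rule SUP_least)
      fix k assume "k \<in> K"
      then have "k \<in> convex hull K" by (rule hull_inc)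
      then have "c < w \<bullet> k" using wK closure_subset by blast
      then show "ereal (- (w \<bullet> k)) \<le> ereal (- c)" by simp
    qed
    finally show False using wz by simp
  qed
qed

theorem proposition3p6:
  fixes e :: "real \<Rightarrow> real"
  assumes "CARD('n::finite) \<ge> 2"
    and "\<exists>a b. \<forall>r. e r = a * r + b"
    and "e 1 > 0" and "e (-1) > 0"
  shows "lambda_hull (Kset e :: 'n zvec set) = convex hull (Kset e)
       \<and> convex hull (Kset e :: 'n zvec set) = closure (Uset e)"
proof -
  obtain a b where aff: "\<And>r. e r = a * r + b" using assms(2) by blast
  have e: "0 \<le> e 1" "0 \<le> e (-1)" using assms(3,4) by simp_all
  have closed: "closed (convex hull (Kset e :: 'n zvec set))"
    by (rule closed_convex_hull_Kset[OF e])
  have hull_mix: "convex hull (Kset e) \<subseteq> (pole_mixture e :: 'n zvec set)"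
    by (rule convex_hull_Kset_subset_pole_mixture[OF e])
  have "pole_mixture e \<subseteq> lambda_hull (Kset e :: 'n zvec set)"
    by (rule pole_mixture_subset_lambda_convex_set[OF assms(1) Kset_subset_lambda_hull
          lambda_convex_set_lambda_hull])
  moreover have "lambda_hull (Kset e) \<subseteq> convex hull (Kset e :: 'n zvec set)"
    using lambda_hull_subset_closure_convex_hull[of "Kset e :: 'n zvec set"] unfolding closure_closed[OF closed] .
  moreover have mix_hull: "pole_mixture e \<subseteq> convex hull (Kset e :: 'n zvec set)"
    by (rule pole_mixture_subset_lambda_convex_set[OF assms(1) hull_subset
          convex_imp_lambda_convex_set[OF convex_convex_hull]])
  moreover have "closure (Uset e) \<subseteq> convex hull (Kset e :: 'n zvec set)"
    by (rule closure_minimal[OF subset_trans[OF Uset_subset_pole_mixture[OF aff] mix_hull] closed])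
  moreover have "pole_mixture e \<subseteq> closure (Uset e :: 'n zvec set)"
    by (rule pole_mixture_subset_closure_Uset[OF aff assms(3,4)])
  ultimately show ?thesis using hull_mix by blast
qed

end
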